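(* Let $(x_i,y_i)_{i=1}^9$ be any nine point pairs in $\mathbb P^2_x\times\mathbb P^2_y$ and $Z$ the $9\times 9$ matrix with rows $x_i^\top\otimes y_i^\top$. Then $Z$ is rank deficient if and only if there is a nonzero matrix $T\in\mathbb C^{3\times 3}$ (a possibly singular projective transformation $\mathbb P^2_x\dashrightarrow\mathbb P^2_y$) such that $y_i^\top(Tx_i)=0$ for all $i=1,\dots,9$, equivalently, $y_i$ lies on the line with normal vector $Tx_i$ for all $i$. Moreover, for such a $T$: (1) if $\operatorname{rank}T=1$, there exist a line $\ell\subset\mathbb P^2_x$ and a line $\ell'\subset\mathbb P^2_y$ such that for each $i$, $x_i\in\ell$ or $y_i\in\ell'$ (possibly both); (2) if $\operatorname{rank}T=2$, there are points $e\in\mathbb P^2_x$ and $e'\in\mathbb P^2_y$ (generating the right and left nullspaces of $T$) and a $\mathbb P^1$-homography sending the pencil of lines through $e$ to the pencil of lines through $e'$ such that the line $\ell_{ex_i}$ is sent to the line $\ell_{e'y_i}$ for each $i$; (3) if $\operatorname{rank}T=3$, then $T\in\mathrm{PGL}(3)$ and $y_i$ lies on the line with normal vector $Tx_i$ for each $i$.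
   Context: Work over $\mathbb C$. The line with normal vector $n\in\mathbb C^3\setminus\{0\}$ is $\{u\in\mathbb P^2:u^\top n=0\}$. For distinct points $a,b$, $\ell_{ab}$ denotes the line through $a$ and $b$. *)

theory Defs
  imports "HOL-Analysis.Analysis"
begin

text \<open>Points of P^2 and normal vectors of lines are represented by nonzero vectors in complex^3
  (homogeneous coordinates).  The pairing u^T n is the (non-conjugating) bilinear form.\<close>

definition bil :: "complex^3 \<Rightarrow> complex^3 \<Rightarrow> complex" where
  "bil u n = (\<Sum>j\<in>UNIV. u $ j * n $ j)"

definition proj_eq :: "complex^3 \<Rightarrow> complex^3 \<Rightarrow> bool" where
  "proj_eq a b \<longleftrightarrow> (\<exists>c. c \<noteq> 0 \<and> a = c *s b)"

text \<open>The 9x9 matrix Z with rows x_i^T tensor y_i^T; the 9 columns are indexed by pairs (j,k)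
  (lexicographic order corresponds to the Kronecker product).\<close>
definition Zmat :: "(9 \<Rightarrow> complex^3) \<Rightarrow> (9 \<Rightarrow> complex^3) \<Rightarrow> complex^(3 \<times> 3)^9" where
  "Zmat x y = (\<chi> i. \<chi> jk. x i $ fst jk * y i $ snd jk)"

text \<open>Pencil of lines through a point e, as the 2-dimensional space of normal vectors
  n with n^T e = 0 (together with 0).\<close>
definition pencil :: "complex^3 \<Rightarrow> (complex^3) set" where
  "pencil e = {n. bil n e = 0}"

end

theory Submission
  imports Defs
begin

text \<open>
  Reshaping a vector t of length 9 into a 3x3 matrix T turns the i-th entry of Z t into
  y_i^T T x_i, so Z is rank deficient iff a nonzero T satisfies all nine incidences.  In rank 1, T = u v^T, and y_i^T T x_i = 0 says that x_i
  lies on the line with normal v or y_i on the line with normal u.  In rank 2 the kernel is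
  spanned by e = a \<times> b for two independent rows a, b, and likewise the left kernel by some e';
  the range of T is the pencil through e'.  Choosing f with f^T e = 1, the map H n = T (n \<times> f)
  sends the line e \<times> v of the pencil through e to T v; hence it maps that pencil bijectively
  onto the pencil through e', and the line through e and x_i to the line T x_i, which passes
  through y_i.
\<close>

lemma rank_le_ncols_gen:
  fixes A :: "'a::field^'n^'m"
  shows "rank A \<le> CARD('n)"
  unfolding row_rank_def_gen by (rule dim_subset_UNIV_cart_gen)

lemma full_rank_iff_trivial_kernel_gen:
  fixes A :: "'a::field^'n^'m"
  shows "rank A = CARD('n) \<longleftrightarrow> (\<forall>x. A *v x = 0 \<longrightarrow> x = 0)"
  by (simp add: matrix_left_invertible_ker [symmetric] matrix_left_invertible_span_rows_gen
      row_rank_def_gen vec.dim_eq_full [symmetric] card_cart_basis vec.dimension_def)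

lemma matrix_nonfull_linear_equations_eq_gen:
  fixes A :: "'a::field^'n^'m"
  shows "(\<exists>x. x \<noteq> 0 \<and> A *v x = 0) \<longleftrightarrow> rank A < CARD('n)"
  using full_rank_iff_trivial_kernel_gen[of A] rank_le_ncols_gen[of A] by auto

lemma full_rank_imp_invertible_gen:
  fixes A :: "'a::field^'n^'n"
  assumes "rank A = CARD('n)"
  shows "invertible A"
  using assms
  by (simp add: invertible_left_inverse matrix_left_invertible_ker full_rank_iff_trivial_kernel_gen)

text \<open>
  The library proves the equality of row and column rank only over the reals, by an
  orthogonality argument; the following proof works over any field.
\<close>

lemma dim_range_le_rank_gen:
  fixes A :: "'a::field^'n^'m"
  shows "vec.dim (range ((*v) A)) \<le> rank A"
proof -
  obtain B where B: "B \<subseteq> rows A" "vec.independent B" "rows A \<subseteq> vec.span B"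
    and card_B: "card B = rank A"
    using vec.basis_exists[of "rows A"] unfolding row_rank_def_gen by metis
  have "finite B" using B(2) vec.finiteI_independent by blast
  have "\<exists>u. row i A = (\<Sum>b\<in>B. u b *s b)" for i
    using B(3) vec.span_finite[OF \<open>finite B\<close>] by (auto simp: rows_def)
  then obtain U where U: "\<And>i. row i A = (\<Sum>b\<in>B. U i b *s b)" by metis
  define c where "c b = (\<chi> i. U i b)" for b
  have decomp: "A *v x = (\<Sum>b\<in>B. (\<Sum>j\<in>UNIV. b $ j * x $ j) *s c b)" for x
  proof -
    have "(A *v x) $ i = (\<Sum>j\<in>UNIV. (\<Sum>b\<in>B. U i b * b $ j) * x $ j)" for i
      using arg_cong[OF U, of "\<lambda>r. \<Sum>j\<in>UNIV. r $ j * x $ j"]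
      by (simp add: matrix_vector_mult_def row_def sum_component)
    then show ?thesis
      by (simp add: vec_eq_iff sum_component c_def sum_distrib_right sum_distrib_left mult_ac
          sum.swap[of _ UNIV B])
  qed
  have "A *v x \<in> vec.span (c ` B)" for x
    unfolding decomp by (intro vec.span_sum vec.span_scale vec.span_base imageI)
  then have "range ((*v) A) \<subseteq> vec.span (c ` B)"
    by blast
  then have "vec.dim (range ((*v) A)) \<le> card (c ` B)"
    using vec.dim_le_card \<open>finite B\<close> by blast
  also have "\<dots> \<le> card B" using \<open>finite B\<close> card_image_le by blast
  finally show ?thesis using card_B by simp
qed

lemma dim_range_eq_rank_transpose_gen:
  fixes A :: "'a::field^'n^'m"
  shows "vec.dim (range ((*v) A)) = rank (transpose A)"
proof -
  have "column j A = A *v axis j 1" for j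
    by (simp add: vec_eq_iff matrix_vector_mult_def column_def axis_def if_distrib cong: if_cong)
  then have "columns A \<subseteq> range ((*v) A)"
    by (auto simp: columns_def)
  moreover have "range ((*v) A) \<subseteq> vec.span (columns A)"
    using matrix_vector_mult_in_columnspace_gen by blast
  ultimately have "vec.span (range ((*v) A)) = vec.span (columns A)"
    by (metis vec.span_mono vec.span_span subset_antisym)
  then show ?thesis
    by (metis row_rank_def_gen rows_transpose vec.dim_span)
qed

lemma rank_transpose_gen:
  fixes A :: "'a::field^'n^'m"
  shows "rank (transpose A) = rank A"
  using dim_range_le_rank_gen[of A] dim_range_le_rank_gen[of "transpose A"]
    dim_range_eq_rank_transpose_gen[of A] dim_range_eq_rank_transpose_gen[of "transpose A"]
  by simp

lemma rank_dim_range_gen: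
  fixes A :: "'a::field^'n^'m"
  shows "rank A = vec.dim (range ((*v) A))"
  by (simp add: dim_range_eq_rank_transpose_gen rank_transpose_gen)

lemma vec3_eq_iff: "(a::'a^3) = b \<longleftrightarrow> a$1 = b$1 \<and> a$2 = b$2 \<and> a$3 = b$3"
  by (simp add: vec_eq_iff forall_3)

lemma bil_expand: "bil u n = u$1*n$1 + u$2*n$2 + u$3*n$3"
  by (simp add: bil_def sum_3)

lemma bil_commute: "bil u n = bil n u"
  by (simp add: bil_def mult.commute)

lemma bil_add_left: "bil (a + b) n = bil a n + bil b n"
  and bil_scale_left: "bil (c *s a) n = c * bil a n"
  and bil_diff_left: "bil (a - b) n = bil a n - bil b n"
  and bil_zero_left [simp]: "bil 0 n = 0"
  by (simp_all add: bil_expand algebra_simps)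

lemma bil_scale_right: "bil a (c *s n) = c * bil a n"
  by (simp add: bil_expand algebra_simps)

lemma bil_matrix_vector_mult: "bil w (T *v z) = bil (w v* T) z"
  by (simp add: bil_expand matrix_vector_mult_def vector_matrix_mult_def sum_3 algebra_simps)

lemma matrix_vector_mult_nth_row: "(T *v v) $ i = bil (row i T) v"
  by (simp add: matrix_vector_mult_def row_def bil_def)

lemma matrix_vector_mult_eq_0_iff: "T *v v = 0 \<longleftrightarrow> (\<forall>r\<in>rows T. bil r v = 0)"
  by (auto simp: vec_eq_iff[of "T *v v"] rows_def matrix_vector_mult_nth_row)

lemma subspace_bil_eq_0: "vec.subspace {u. bil u n = 0}"
  by (rule vec.subspaceI) (auto simp: bil_add_left bil_scale_left)

lemma ex_bil_eq_1:
  assumes "e \<noteq> 0"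
  shows "\<exists>f. bil e f = 1"
proof -
  obtain k where "e $ k \<noteq> 0" using assms by (auto simp: vec_eq_iff)
  then have "bil e (axis k (1 / e $ k)) = 1"
    using exhaust_3[of k] by (auto simp: bil_expand axis_def)
  then show ?thesis ..
qed

definition cross :: "complex^3 \<Rightarrow> complex^3 \<Rightarrow> complex^3" where
  "cross a b = vector [a$2*b$3 - a$3*b$2, a$3*b$1 - a$1*b$3, a$1*b$2 - a$2*b$1]"

lemma cross_nth [simp]:
  "cross a b $ 1 = a$2*b$3 - a$3*b$2"
  "cross a b $ 2 = a$3*b$1 - a$1*b$3"
  "cross a b $ 3 = a$1*b$2 - a$2*b$1"
  by (simp_all add: cross_def)

lemma cross_cross_left: "cross (cross a b) c = bil a c *s b - bil b c *s a"
  and cross_cross_right: "cross a (cross b c) = bil a c *s b - bil a b *s c"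
  by (simp_all add: vec3_eq_iff bil_expand algebra_simps)

lemma bil_cross_left [simp]: "bil a (cross a b) = 0"
  and bil_cross_right [simp]: "bil b (cross a b) = 0"
  by (simp_all add: bil_expand algebra_simps)

lemma cross_zero_left [simp]: "cross 0 b = 0"
  and cross_scale_right_self [simp]: "cross a (c *s a) = 0"
  and cross_diff_left: "cross (a - b) d = cross a d - cross b d"
  by (simp_all add: vec3_eq_iff algebra_simps)

lemma cross_eq_0_imp_parallel:
  assumes "p \<noteq> 0" and "cross p q = 0"
  shows "\<exists>k. q = k *s p"
proof -
  obtain r where r: "bil p r = 1" using ex_bil_eq_1[OF assms(1)] ..
  have "bil p r *s q - bil q r *s p = 0"
    using arg_cong[OF assms(2), of "\<lambda>w. cross w r"] by (simp add: cross_cross_left)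
  then have "q = bil q r *s p" using r by simp
  then show ?thesis ..
qed

lemma cross_ne_0_if_not_proj_eq:
  assumes "e \<noteq> 0" and "x \<noteq> 0" and "\<not> proj_eq x e"
  shows "cross e x \<noteq> 0"
proof
  assume "cross e x = 0"
  then obtain c where "x = c *s e" using cross_eq_0_imp_parallel[OF assms(1)] by blast
  then show False using assms(2,3) by (cases "c = 0") (auto simp: proj_eq_def)
qed

lemma linear_cross_left: "Vector_Spaces.linear (*s) (*s) (\<lambda>n. cross n f)"
  by unfold_locales (simp_all add: vec3_eq_iff algebra_simps)

lemma common_zeros_two_forms:
  assumes "cross a b \<noteq> 0"
  shows "{v. bil a v = 0 \<and> bil b v = 0} = {c *s cross a b | c. True}"
proof (intro set_eqI iffI)
  fix v assume "v \<in> {v. bil a v = 0 \<and> bil b v = 0}"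
  then have "cross (cross a b) v = 0" by (simp add: cross_cross_left)
  then show "v \<in> {c *s cross a b | c. True}" using cross_eq_0_imp_parallel[OF assms] by auto
qed (auto simp: bil_scale_right)

lemma rank1_decomposition:
  fixes T :: "complex^3^3"
  assumes "rank T = 1"
  shows "\<exists>u v. u \<noteq> 0 \<and> v \<noteq> 0 \<and> (\<forall>x. T *v x = bil x v *s u)"
proof -
  obtain B where B: "B \<subseteq> rows T" "vec.independent B" "rows T \<subseteq> vec.span B" "card B = 1"
    using vec.basis_exists[of "rows T"] assms by (metis row_rank_def_gen)
  then obtain v where Bv: "B = {v}" by (auto simp: card_Suc_eq)
  have "v \<noteq> 0" using B(2) Bv vec.dependent_zero by blast
  have "\<forall>i. \<exists>c. row i T = c *s v"
    using B(3) Bv by (auto simp: rows_def vec.span_singleton)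
  then obtain c where c: "\<And>i. row i T = c i *s v" by metis
  define u where "u = (\<chi> i. c i)"
  have "T *v x = bil x v *s u" for x
    by (simp add: vec_eq_iff u_def matrix_vector_mult_nth_row c bil_scale_left bil_commute[of v])
  moreover have "u \<noteq> 0"
  proof -
    obtain i where "v = row i T" using B(1) Bv by (auto simp: rows_def)
    then have "c i \<noteq> 0" using c[of i] \<open>v \<noteq> 0\<close> by auto
    then show ?thesis by (auto simp: u_def vec_eq_iff)
  qed
  ultimately show ?thesis using \<open>v \<noteq> 0\<close> by blast
qed

lemma rank1_incident_lines:
  fixes T :: "complex^3^3" and x y :: "'i \<Rightarrow> complex^3"
  assumes "rank T = 1" and "\<forall>i. bil (y i) (T *v x i) = 0"
  shows "\<exists>n n'. n \<noteq> 0 \<and> n' \<noteq> 0 \<and> (\<forall>i. bil (x i) n = 0 \<or> bil (y i) n' = 0)"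
proof -
  obtain u v where "u \<noteq> 0" "v \<noteq> 0" and "\<forall>z. T *v z = bil z v *s u"
    using rank1_decomposition[OF assms(1)] by blast
  then show ?thesis using assms(2) by (auto simp: bil_scale_right)
qed

lemma rank2_kernel:
  fixes T :: "complex^3^3"
  assumes "rank T = 2"
  shows "\<exists>e. e \<noteq> 0 \<and> {v. T *v v = 0} = {c *s e | c. True}"
proof -
  obtain B where B: "B \<subseteq> rows T" "vec.independent B" "rows T \<subseteq> vec.span B" "card B = 2"
    using vec.basis_exists[of "rows T"] assms by (metis row_rank_def_gen)
  then obtain a b where Bab: "B = {a, b}" and "a \<noteq> b" by (auto simp: card_2_iff)
  have "cross a b \<noteq> 0"
  proof
    assume "cross a b = 0"
    moreover have "a \<noteq> 0" using B(2) Bab vec.dependent_zero by blast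
    ultimately obtain k where "b = k *s a" using cross_eq_0_imp_parallel by blast
    then have "b \<in> vec.span ({a, b} - {b})"
      using \<open>a \<noteq> b\<close> by (auto simp: vec.span_singleton insert_Diff_if)
    then show False
      using B(2) Bab vec.dependent_def by blast
  qed
  have "{v. T *v v = 0} = {v. bil a v = 0 \<and> bil b v = 0}"
  proof (intro set_eqI iffI)
    fix v assume "v \<in> {v. bil a v = 0 \<and> bil b v = 0}"
    then have "vec.span B \<subseteq> {r. bil r v = 0}"
      by (intro vec.span_minimal subspace_bil_eq_0) (auto simp: Bab)
    then show "v \<in> {v. T *v v = 0}"
      using B(3) by (auto simp: matrix_vector_mult_eq_0_iff)
  qed (use B(1) Bab in \<open>auto simp: matrix_vector_mult_eq_0_iff\<close>)
  then show ?thesis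
    using common_zeros_two_forms \<open>cross a b \<noteq> 0\<close> by auto
qed

lemma dim_pencil_le_2:
  assumes "e \<noteq> 0"
  shows "vec.dim (pencil e) \<le> 2"
proof -
  obtain f where "bil e f = 1" using ex_bil_eq_1[OF assms] ..
  then have "f \<notin> pencil e" by (simp add: pencil_def bil_commute)
  moreover have "vec.span (pencil e) = pencil e"
    unfolding pencil_def by (simp add: vec.span_eq_iff subspace_bil_eq_0)
  ultimately have "vec.span (pencil e) \<noteq> UNIV" by (metis UNIV_I)
  then have "vec.dim (pencil e) \<noteq> 3"
    by (simp add: vec.dim_eq_full[symmetric] vec.dimension_def card_cart_basis)
  then show ?thesis using dim_subset_UNIV_cart_gen[of "pencil e"] by simp
qed

lemma range_rank2_eq_pencil:
  fixes T :: "complex^3^3"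
  assumes "rank T = 2" and "e' \<noteq> 0" and "e' v* T = 0"
  shows "range ((*v) T) = pencil e'"
proof (rule vec.subspace_dim_equal)
  show "vec.subspace (range ((*v) T))"
    using vec.subspace_image[OF vec.subspace_UNIV] by simp
  show "vec.subspace (pencil e')"
    unfolding pencil_def by (rule subspace_bil_eq_0)
  show "range ((*v) T) \<subseteq> pencil e'"
    using assms(3) by (auto simp: pencil_def bil_commute[of _ e'] bil_matrix_vector_mult)
  show "vec.dim (pencil e') \<le> vec.dim (range ((*v) T))"
    using dim_pencil_le_2[OF assms(2)] assms(1) by (simp flip: rank_dim_range_gen)
qed

lemma rank2_pencil_homography:
  fixes T :: "complex^3^3"
  assumes rank: "rank T = 2"
    and "e \<noteq> 0" and ker: "{v. T *v v = 0} = {c *s e | c. True}"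
    and "e' \<noteq> 0" and "e' v* T = 0"
  shows "\<exists>H. bij_betw ((*v) H) (pencil e) (pencil e') \<and> (\<forall>v. H *v cross e v = T *v v)"
proof -
  obtain f where ef: "bil e f = 1" using ex_bil_eq_1[OF \<open>e \<noteq> 0\<close>] ..
  define H where "H = matrix (\<lambda>n. T *v cross n f)"
  have H: "H *v n = T *v cross n f" for n
    unfolding H_def
    by (rule matrix_works) (rule Vector_Spaces.linear_compose[OF linear_cross_left, unfolded o_def],
        rule matrix_vector_mul_linear_gen)
  have "T *v e = 0" using ker by (metis (mono_tags) mem_Collect_eq vec.scale_one)
  then have H_cross: "H *v cross e v = T *v v" for v
    by (simp add: H cross_cross_left ef matrix_vector_mult_diff_distrib vector_scalar_commute)
  have pencil_cross: "n = cross e (cross n f)" if "n \<in> pencil e" for n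
    using that by (simp add: cross_cross_right ef bil_commute[of e n] pencil_def)
  have "inj_on ((*v) H) (pencil e)"
  proof (rule inj_onI)
    fix n m assume n: "n \<in> pencil e" and m: "m \<in> pencil e" and "H *v n = H *v m"
    then have "T *v cross (n - m) f = 0"
      by (simp add: H cross_diff_left matrix_vector_mult_diff_distrib)
    then obtain c where "cross (n - m) f = c *s e" using ker by blast
    moreover have "n - m \<in> pencil e" using n m by (simp add: pencil_def bil_diff_left)
    ultimately have "n - m = 0" using pencil_cross[of "n - m"] by simp
    then show "n = m" by simp
  qed
  moreover have "(*v) H ` pencil e = pencil e'"
  proof -
    have "(*v) H ` pencil e = range ((*v) T)"
    proof (intro set_eqI iffI)
      fix w assume "w \<in> range ((*v) T)"
      then obtain v where "w = H *v cross e v" by (auto simp: H_cross)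
      moreover have "cross e v \<in> pencil e" by (simp add: pencil_def bil_commute)
      ultimately show "w \<in> (*v) H ` pencil e" by blast
    qed (auto simp: H)
    then show ?thesis using range_rank2_eq_pencil[OF rank assms(4,5)] by simp
  qed
  ultimately show ?thesis using H_cross unfolding bij_betw_def by blast
qed

lemma rank2_epipoles_homography:
  fixes T :: "complex^3^3" and x y :: "'i \<Rightarrow> complex^3"
  assumes hx: "\<forall>i. x i \<noteq> 0" and hT: "\<forall>i. bil (y i) (T *v x i) = 0" and rank: "rank T = 2"
  shows "\<exists>e e' H. e \<noteq> 0 \<and> e' \<noteq> 0
               \<and> {v. T *v v = 0} = {c *s e | c. True}
               \<and> {w. w v* T = 0} = {c *s e' | c. True}
               \<and> bij_betw (\<lambda>n. (H::complex^3^3) *v n) (pencil e) (pencil e')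
               \<and> (\<forall>i. \<not> proj_eq (x i) e \<and> \<not> proj_eq (y i) e' \<longrightarrow>
                     (\<forall>n. n \<noteq> 0 \<and> bil e n = 0 \<and> bil (x i) n = 0 \<longrightarrow>
                          bil e' (H *v n) = 0 \<and> bil (y i) (H *v n) = 0))"
proof -
  obtain e where "e \<noteq> 0" and ker: "{v. T *v v = 0} = {c *s e | c. True}"
    using rank2_kernel[OF rank] by blast
  obtain e' where "e' \<noteq> 0" and "{w. transpose T *v w = 0} = {c *s e' | c. True}"
    using rank2_kernel[of "transpose T"] rank by (auto simp: rank_transpose_gen)
  then have left_ker: "{w. w v* T = 0} = {c *s e' | c. True}" by simp
  then have "e' v* T = 0" by (metis (mono_tags) mem_Collect_eq vec.scale_one)
  then have e'_range: "bil e' (T *v z) = 0" for z by (simp add: bil_matrix_vector_mult)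
  obtain H where bij: "bij_betw ((*v) H) (pencil e) (pencil e')"
    and H_cross: "\<And>v. H *v cross e v = T *v v"
    using rank2_pencil_homography[OF rank \<open>e \<noteq> 0\<close> ker \<open>e' \<noteq> 0\<close> \<open>e' v* T = 0\<close>] by blast
  have "bil e' (H *v n) = 0 \<and> bil (y i) (H *v n) = 0"
    if np: "\<not> proj_eq (x i) e" and n: "bil e n = 0" "bil (x i) n = 0" for i n
  proof -
    have "cross e (x i) \<noteq> 0" using cross_ne_0_if_not_proj_eq \<open>e \<noteq> 0\<close> hx np by blast
    then obtain c where "n = c *s cross e (x i)"
      using common_zeros_two_forms[of e "x i"] n by (auto simp: bil_commute[of n])
    then have "H *v n = c *s (T *v x i)" by (simp add: vector_scalar_commute H_cross)
    then show ?thesis using e'_range hT by (simp add: bil_scale_right)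
  qed
  then show ?thesis using \<open>e \<noteq> 0\<close> \<open>e' \<noteq> 0\<close> ker left_ker bij by blast
qed

text \<open>The index order matches the columns of \<open>Zmat\<close>: entry (j, k) multiplies x_j y_k.\<close>

definition flatten :: "'a^'n^'m \<Rightarrow> 'a^('n \<times> 'm)" where
  "flatten T = (\<chi> jk. T $ snd jk $ fst jk)"

lemma flatten_eq_0_iff: "flatten T = 0 \<longleftrightarrow> T = 0"
  by (auto simp: flatten_def vec_eq_iff)

lemma surj_flatten: "surj flatten"
proof (rule surjI)
  show "flatten (\<chi> k j. t $ (j, k)) = t" for t :: "'a^('n::finite \<times> 'm::finite)"
    by (simp add: flatten_def vec_eq_iff)
qed

lemma Zmat_mult_flatten: "Zmat x y *v flatten T = (\<chi> i. bil (y i) (T *v x i))"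
proof -
  have "(Zmat x y *v flatten T) $ i = (\<Sum>j\<in>UNIV. \<Sum>k\<in>UNIV. x i $ j * y i $ k * T $ k $ j)" for i
    by (simp add: Zmat_def flatten_def matrix_vector_mult_def sum.cartesian_product
        case_prod_unfold flip: UNIV_Times_UNIV)
  also have "\<dots> i = (\<Sum>k\<in>UNIV. \<Sum>j\<in>UNIV. x i $ j * y i $ k * T $ k $ j)" for i
    by (rule sum.swap)
  also have "\<dots> i = bil (y i) (T *v x i)" for i
    by (simp add: bil_def matrix_vector_mult_def sum_distrib_left mult_ac)
  finally show ?thesis by (simp add: vec_eq_iff)
qed

lemma rank_Zmat_less_9_iff:
  "rank (Zmat x y) < 9 \<longleftrightarrow> (\<exists>T::complex^3^3. T \<noteq> 0 \<and> (\<forall>i. bil (y i) (T *v x i) = 0))"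
proof -
  have "rank (Zmat x y) < 9 \<longleftrightarrow> (\<exists>t. t \<noteq> 0 \<and> Zmat x y *v t = 0)"
    by (simp add: matrix_nonfull_linear_equations_eq_gen)
  also have "\<dots> \<longleftrightarrow> (\<exists>T::complex^3^3. T \<noteq> 0 \<and> Zmat x y *v flatten T = 0)"
    using surj_flatten flatten_eq_0_iff by (metis surjD)
  also have "\<dots> \<longleftrightarrow> (\<exists>T::complex^3^3. T \<noteq> 0 \<and> (\<forall>i. bil (y i) (T *v x i) = 0))"
    by (simp add: Zmat_mult_flatten vec_eq_iff)
  finally show ?thesis .
qed

theorem mainTheorem4:
  fixes x y :: "9 \<Rightarrow> complex^3"
  assumes hx: "\<forall>i. x i \<noteq> 0" and hy: "\<forall>i. y i \<noteq> 0"
  shows "(rank (Zmat x y) < 9 \<longleftrightarrow>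
            (\<exists>T::complex^3^3. T \<noteq> 0 \<and> (\<forall>i. bil (y i) (T *v x i) = 0)))
    \<and> (\<forall>T::complex^3^3. T \<noteq> 0 \<and> (\<forall>i. bil (y i) (T *v x i) = 0) \<longrightarrow>
         (rank T = 1 \<longrightarrow>
            (\<exists>n n'. n \<noteq> 0 \<and> n' \<noteq> 0 \<and> (\<forall>i. bil (x i) n = 0 \<or> bil (y i) n' = 0)))
       \<and> (rank T = 2 \<longrightarrow>
            (\<exists>e e' H. e \<noteq> 0 \<and> e' \<noteq> 0
               \<and> {v. T *v v = 0} = {c *s e | c. True}
               \<and> {w. w v* T = 0} = {c *s e' | c. True}
               \<and> bij_betw (\<lambda>n. (H::complex^3^3) *v n) (pencil e) (pencil e')
               \<and> (\<forall>i. \<not> proj_eq (x i) e \<and> \<not> proj_eq (y i) e' \<longrightarrow>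
                     (\<forall>n. n \<noteq> 0 \<and> bil e n = 0 \<and> bil (x i) n = 0 \<longrightarrow>
                          bil e' (H *v n) = 0 \<and> bil (y i) (H *v n) = 0))))
       \<and> (rank T = 3 \<longrightarrow> invertible T \<and> (\<forall>i. bil (y i) (T *v x i) = 0)))"
proof -
  have "invertible T" if "rank T = 3" for T :: "complex^3^3"
    using full_rank_imp_invertible_gen[of T] that by simp
  then show ?thesis
    by (intro conjI allI impI rank_Zmat_less_9_iff; elim conjE)
      (blast intro: rank1_incident_lines rank2_epipoles_homography[OF hx])+
qed

end
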